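(* Let $\mathcal{T}$ be a locally compact, $\sigma$-compact Hausdorff space, $\mu$ a finite positive Radon measure on $\mathcal{T}$ with $\mu(\mathcal{T})>0$, $1\le p<\infty$ with conjugate $q$. For $\varepsilon>1$ let $S_\varepsilon^p=\{f\in L^q_\mu(\mathcal{T})\text{ real}:\|f\|_q\le\varepsilon,\ \int f\,d\mu=\mu(\mathcal{T})^{1/p}\}$ and $L^p(\mathcal{T})_\varepsilon^+=\{g\in L^p_\mu(\mathcal{T})\text{ real}:\int gf\,d\mu\ge0\ \forall f\in S_\varepsilon^p\}$, and let $L^p(\mathcal{T})_+$ be the $\mu$-a.e. nonnegative functions. If $L^p(\mathcal{T})_+\subseteq L^p(\mathcal{T})_\varepsilon^+$ for some $\varepsilon>1$, then $r_\mu=\inf\{\mu(E):E\ \mu\text{-measurable},\ \mu(E)>0\}>0$. *)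

theory Defs
  imports "HOL-Analysis.Analysis" "HOL-Probability.Essential_Supremum"
begin

definition sigma_compact_space :: "'a topology \<Rightarrow> bool" where
  "sigma_compact_space X \<longleftrightarrow>
     (\<exists>K. countable K \<and> (\<forall>k\<in>K. compactin X k) \<and> \<Union>K = topspace X)"

definition radon_measure :: "'a topology \<Rightarrow> 'a measure \<Rightarrow> bool" where
  "radon_measure X M \<longleftrightarrow>
     space M = topspace X \<and>
     (\<forall>U. openin X U \<longrightarrow> U \<in> sets M) \<and>
     (\<forall>K. compactin X K \<longrightarrow> emeasure M K < \<infinity>) \<and>
     (\<forall>E\<in>sets M. emeasure M E = (INF U\<in>{U. openin X U \<and> E \<subseteq> U}. emeasure M U)) \<and>
     (\<forall>U. openin X U \<longrightarrow> emeasure M U = (SUP K\<in>{K. compactin X K \<and> K \<subseteq> U}. emeasure M K))"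

definition conj_exp :: "real \<Rightarrow> ereal" where
  "conj_exp p = (if p = 1 then \<infinity> else ereal (p / (p - 1)))"

definition lp_mem :: "'a measure \<Rightarrow> ereal \<Rightarrow> ('a \<Rightarrow> real) \<Rightarrow> bool" where
  "lp_mem M r f \<longleftrightarrow> f \<in> borel_measurable M \<and>
     (if r = \<infinity> then esssup M (\<lambda>x. ereal \<bar>f x\<bar>) < \<infinity>
      else integrable M (\<lambda>x. \<bar>f x\<bar> powr real_of_ereal r))"

definition lp_norm :: "'a measure \<Rightarrow> ereal \<Rightarrow> ('a \<Rightarrow> real) \<Rightarrow> ereal" where
  "lp_norm M r f = (if r = \<infinity> then esssup M (\<lambda>x. ereal \<bar>f x\<bar>)
     else ereal ((\<integral>x. \<bar>f x\<bar> powr real_of_ereal r \<partial>M) powr (1 / real_of_ereal r)))"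

definition S_eps :: "'a measure \<Rightarrow> real \<Rightarrow> real \<Rightarrow> ('a \<Rightarrow> real) set" where
  "S_eps M p \<epsilon> = {f. lp_mem M (conj_exp p) f \<and> lp_norm M (conj_exp p) f \<le> ereal \<epsilon> \<and>
                     (\<integral>x. f x \<partial>M) = measure M (space M) powr (1 / p)}"

definition Lp_pos :: "'a measure \<Rightarrow> real \<Rightarrow> ('a \<Rightarrow> real) set" where
  "Lp_pos M p = {g. lp_mem M (ereal p) g \<and> (AE x in M. g x \<ge> 0)}"

definition Lp_eps_pos :: "'a measure \<Rightarrow> real \<Rightarrow> real \<Rightarrow> ('a \<Rightarrow> real) set" where
  "Lp_eps_pos M p \<epsilon> = {g. lp_mem M (ereal p) g \<and> (\<forall>f\<in>S_eps M p \<epsilon>. (\<integral>x. g x * f x \<partial>M) \<ge> 0)}"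

end

theory Submission
  imports Defs
begin

text \<open>Only the finiteness of \<open>\<mu>\<close> matters. If \<open>E\<close> has measure \<open>a\<close> with
  \<open>c = (\<mu>(T) + a) / (\<mu>(T) - a) \<le> \<epsilon>\<close>, let \<open>h\<close> be \<open>-1\<close> on \<open>E\<close> and \<open>c\<close> off \<open>E\<close>. Then
  \<open>\<integral>h = \<mu>(T)\<close> and \<open>|h| \<le> c\<close>, so \<open>\<mu>(T)\<^bsup>(1-p)/p\<^esup> h\<close> has integral \<open>\<mu>(T)\<^bsup>1/p\<^esup>\<close> and
  \<open>q\<close>-norm at most \<open>c\<close>: it lies in \<open>S\<^sub>\<epsilon>\<^sup>p\<close>, yet pairs negatively with the nonnegative
  function \<open>1\<^sub>E\<close>. Hence every set of positive measure has measure
  at least \<open>\<mu>(T) (\<epsilon> - 1) / (\<epsilon> + 1)\<close>.\<close>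

lemma esssup_abs_le_if_bounded:
  assumes "f \<in> borel_measurable M" and "\<forall>x\<in>space M. \<bar>f x\<bar> \<le> c"
  shows "esssup M (\<lambda>x. ereal \<bar>f x\<bar>) \<le> ereal c"
  using assms by (intro esssup_I) (auto intro!: AE_I2)

lemma (in finite_measure) integral_abs_powr_le_if_bounded:
  assumes "f \<in> borel_measurable M" and "\<forall>x\<in>space M. \<bar>f x\<bar> \<le> c" and "0 \<le> c" and "0 < r"
  shows "integrable M (\<lambda>x. \<bar>f x\<bar> powr r)"
    and "(\<integral>x. \<bar>f x\<bar> powr r \<partial>M) powr (1 / r) \<le> c * measure M (space M) powr (1 / r)"
proof -
  have bound: "\<bar>f x\<bar> powr r \<le> c powr r" if "x \<in> space M" for x
    using assms that by (intro powr_mono2) auto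
  show int: "integrable M (\<lambda>x. \<bar>f x\<bar> powr r)"
    using assms(1) bound by (intro integrable_const_bound[where B = "c powr r"] AE_I2) auto
  have "(\<integral>x. \<bar>f x\<bar> powr r \<partial>M) \<le> c powr r * measure M (space M)"
    using integral_mono[OF int integrable_const[of "c powr r"]] bound by (simp add: mult.commute)
  then have "(\<integral>x. \<bar>f x\<bar> powr r \<partial>M) powr (1 / r) \<le> (c powr r * measure M (space M)) powr (1 / r)"
    using assms(4) by (intro powr_mono2) auto
  also have "\<dots> = c * measure M (space M) powr (1 / r)"
    using assms(3,4) by (simp add: powr_mult powr_powr)
  finally show "(\<integral>x. \<bar>f x\<bar> powr r \<partial>M) powr (1 / r) \<le> c * measure M (space M) powr (1 / r)" .
qed

text \<open>The hypothesis \<open>\<mu>(T) > 0\<close> is needed for \<open>p = 1\<close>, since \<open>0 powr 0 = 0\<close>.\<close>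

lemma (in finite_measure) lp_conj_exp_le_if_bounded:
  assumes "f \<in> borel_measurable M" and "\<forall>x\<in>space M. \<bar>f x\<bar> \<le> c" and "0 \<le> c"
    and "measure M (space M) > 0" and "1 \<le> p"
  shows "lp_mem M (conj_exp p) f"
    and "lp_norm M (conj_exp p) f \<le> ereal (c * measure M (space M) powr ((p - 1) / p))"
proof -
  have "lp_mem M (conj_exp p) f \<and>
      lp_norm M (conj_exp p) f \<le> ereal (c * measure M (space M) powr ((p - 1) / p))"
  proof (cases "p = 1")
    case True
    then show ?thesis
      using assms esssup_abs_le_if_bounded[OF assms(1,2)]
      by (auto simp: lp_mem_def lp_norm_def conj_exp_def)
  next
    case False
    then have r: "conj_exp p = ereal (p / (p - 1))" "0 < p / (p - 1)" "1 / (p / (p - 1)) = (p - 1) / p"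
      using assms(5) by (auto simp: conj_exp_def)
    show ?thesis
      using assms(1) integral_abs_powr_le_if_bounded[OF assms(1-3) r(2)]
      by (simp add: lp_mem_def lp_norm_def r(1,3))
  qed
  then show "lp_mem M (conj_exp p) f"
    and "lp_norm M (conj_exp p) f \<le> ereal (c * measure M (space M) powr ((p - 1) / p))"
    by auto
qed

lemma (in finite_measure) indicator_in_Lp_pos:
  assumes "E \<in> sets M" and "0 < p"
  shows "indicator E \<in> Lp_pos M p"
proof -
  have "(\<lambda>x. \<bar>indicator E x :: real\<bar> powr p) = indicator E"
    using assms(2) by (auto simp: indicator_def)
  then show ?thesis
    using assms(1) by (auto simp: Lp_pos_def lp_mem_def emeasure_eq_measure)
qed

lemma (in finite_measure) two_valued_in_S_eps:
  fixes E :: "'a set" and p \<epsilon> :: real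
  defines "m \<equiv> measure M (space M)"
  defines "c \<equiv> (m + measure M E) / (m - measure M E)"
  assumes "E \<in> sets M" and "measure M E < m" and "c \<le> \<epsilon>" and "1 \<le> p"
  shows "(\<lambda>x. m powr ((1 - p) / p) * (if x \<in> E then -1 else c)) \<in> S_eps M p \<epsilon>"
proof -
  define a where "a = measure M E"
  define \<beta> where "\<beta> = m powr ((1 - p) / p)"
  define h where "h x = (if x \<in> E then -1 else c)" for x
  have "0 \<le> a"
    by (simp add: a_def)
  then have "0 < m"
    using assms(4) unfolding a_def by linarith
  have "1 \<le> c"
    using \<open>0 \<le> a\<close> assms(4) by (simp add: c_def a_def[symmetric] field_simps)
  have h_eq: "h = (\<lambda>x. c - (c + 1) * indicator E x)"
    by (auto simp: h_def indicator_def)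
  have "(\<integral>x. h x \<partial>M) = c * m - (c + 1) * a"
    unfolding h_eq using assms(3)
    by (subst Bochner_Integration.integral_diff) (auto simp: m_def a_def emeasure_eq_measure)
  also have "\<dots> = c * (m - a) - a"
    by (simp add: algebra_simps)
  also have "c * (m - a) = m + a"
    using assms(4) by (simp add: c_def a_def)
  finally have "(\<integral>x. h x \<partial>M) = m"
    by simp
  then have "(\<integral>x. \<beta> * h x \<partial>M) = \<beta> * m"
    by simp
  also have "\<dots> = m powr ((1 - p) / p + 1)"
    using \<open>0 < m\<close> by (simp add: \<beta>_def powr_add)
  also have "(1 - p) / p + 1 = 1 / p"
    using assms(6) by (simp add: field_simps)
  finally have integral: "(\<integral>x. \<beta> * h x \<partial>M) = m powr (1 / p)" .
  have "0 < \<beta>"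
    using \<open>0 < m\<close> by (simp add: \<beta>_def)
  have bound: "\<forall>x\<in>space M. \<bar>\<beta> * h x\<bar> \<le> \<beta> * c"
    using \<open>1 \<le> c\<close> \<open>0 < \<beta>\<close> by (auto simp: h_def abs_mult mult_le_cancel_left1)
  have measurable: "(\<lambda>x. \<beta> * h x) \<in> borel_measurable M"
    unfolding h_def using assms(3) by measurable
  have "0 \<le> \<beta> * c" "measure M (space M) > 0"
    using \<open>0 < \<beta>\<close> \<open>1 \<le> c\<close> \<open>0 < m\<close> by (simp_all add: m_def)
  note bounded = lp_conj_exp_le_if_bounded[OF measurable bound this assms(6), folded m_def]
  have "\<beta> * c * m powr ((p - 1) / p) = c * m powr ((1 - p) / p + (p - 1) / p)"
    by (simp add: \<beta>_def powr_add)
  also have "\<dots> = c"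
    using \<open>0 < m\<close> by (simp add: diff_divide_distrib)
  finally have "lp_norm M (conj_exp p) (\<lambda>x. \<beta> * h x) \<le> ereal \<epsilon>"
    using bounded(2) assms(5) by (metis ereal_less_eq(3) order_trans)
  with bounded(1) have "(\<lambda>x. \<beta> * h x) \<in> S_eps M p \<epsilon>"
    using integral by (simp add: S_eps_def m_def)
  then show ?thesis
    by (simp add: \<beta>_def h_def)
qed

lemma (in finite_measure) measure_ge_if_Lp_pos_subset_Lp_eps_pos:
  assumes "Lp_pos M p \<subseteq> Lp_eps_pos M p \<epsilon>" and "1 \<le> p" and "1 < \<epsilon>"
    and "E \<in> sets M" and "0 < measure M E"
  shows "measure M (space M) * (\<epsilon> - 1) / (\<epsilon> + 1) \<le> measure M E"
proof (rule ccontr)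
  define m where "m = measure M (space M)"
  define a where "a = measure M E"
  define c where "c = (m + a) / (m - a)"
  assume "\<not> ?thesis"
  then have small: "a * (\<epsilon> + 1) < m * (\<epsilon> - 1)"
    using assms(3) by (simp add: m_def a_def field_simps)
  have "0 < m"
    using assms(5) bounded_measure[of E] by (simp add: m_def)
  then have "a * (\<epsilon> + 1) < m * (\<epsilon> + 1)"
    using small by (simp add: algebra_simps)
  then have "a < m"
    using assms(3) by simp
  then have "c \<le> \<epsilon>"
    using small by (simp add: c_def field_simps)
  define \<beta> where "\<beta> = m powr ((1 - p) / p)"
  define f where "f = (\<lambda>x. \<beta> * (if x \<in> E then -1 else c))"
  have "f \<in> S_eps M p \<epsilon>"
    using \<open>a < m\<close> \<open>c \<le> \<epsilon>\<close> unfolding f_def \<beta>_def c_def m_def a_def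
    by (rule two_valued_in_S_eps[OF assms(4) _ _ assms(2)])
  moreover have "indicator E \<in> Lp_eps_pos M p \<epsilon>"
    using indicator_in_Lp_pos[OF assms(4)] assms(1,2) by auto
  ultimately have "0 \<le> (\<integral>x. indicator E x * f x \<partial>M)"
    by (auto simp: Lp_eps_pos_def)
  also have "(\<integral>x. indicator E x * f x \<partial>M) = (\<integral>x. indicator E x * (- \<beta>) \<partial>M)"
    by (intro Bochner_Integration.integral_cong) (auto simp: f_def indicator_def)
  also have "\<dots> = - a * \<beta>"
    using assms(4) by (simp add: a_def)
  finally show False
    using assms(5) \<open>a < m\<close> by (simp add: a_def \<beta>_def mult_le_0_iff)
qed

theorem lemma5p4:
  fixes X :: "'a topology" and M :: "'a measure" and p \<epsilon> :: real
  assumes "locally_compact_space X" and "Hausdorff_space X" and "sigma_compact_space X"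
    and "radon_measure X M" and "finite_measure M" and "emeasure M (space M) > 0"
    and "1 \<le> p"
    and "\<epsilon> > 1" and "Lp_pos M p \<subseteq> Lp_eps_pos M p \<epsilon>"
  shows "(INF E\<in>{E\<in>sets M. emeasure M E > 0}. emeasure M E) > 0"
proof -
  interpret finite_measure M
    by fact
  define r where "r = measure M (space M) * (\<epsilon> - 1) / (\<epsilon> + 1)"
  have "0 < r"
    using assms(6,8) by (simp add: r_def emeasure_eq_measure)
  have "ennreal r \<le> emeasure M E" if "E \<in> sets M" and "emeasure M E > 0" for E
    using measure_ge_if_Lp_pos_subset_Lp_eps_pos[OF assms(9,7,8) that(1)] that
    by (simp add: r_def emeasure_eq_measure)
  then have "ennreal r \<le> (INF E\<in>{E\<in>sets M. emeasure M E > 0}. emeasure M E)"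
    by (intro INF_greatest) auto
  moreover have "0 < ennreal r"
    using \<open>0 < r\<close> by simp
  ultimately show ?thesis
    by (rule order.strict_trans2[rotated])
qed

end
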